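(* Let $\mathbb{F}_q$ be a finite field. For any sets $\mathcal{A},\mathcal{B},\mathcal{C}\subseteq\mathbb{F}_q$ with $A=\#\mathcal{A}$ and any nontrivial additive character $\psi$ of $\mathbb{F}_q$, $$|S_\psi(\mathcal{A},\mathcal{B},\mathcal{C})|\le A^{1/2}\,\mathrm{E}(\mathcal{B})^{1/4}\,\mathrm{E}(\mathcal{C})^{1/4}\,q^{1/2}.$$
   Context: $S_\psi(\mathcal{A},\mathcal{B},\mathcal{C})=\sum_{a\in\mathcal{A}}\sum_{b\in\mathcal{B}}\sum_{c\in\mathcal{C}}\psi(ab+ac+bc)$. $\mathrm{E}(\mathcal{U})=\#\{(u_1,u_2,u_3,u_4)\in\mathcal{U}^4:u_1+u_2=u_3+u_4\}$. *)

theory Defs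
  imports Complex_Main
begin

definition additive_character :: "('a::{finite,field} \<Rightarrow> complex) \<Rightarrow> bool" where
  "additive_character \<psi> \<longleftrightarrow> (\<forall>x y. \<psi> (x + y) = \<psi> x * \<psi> y) \<and> (\<forall>x. norm (\<psi> x) = 1)"

definition nontrivial_character :: "('a::{finite,field} \<Rightarrow> complex) \<Rightarrow> bool" where
  "nontrivial_character \<psi> \<longleftrightarrow> (\<exists>x. \<psi> x \<noteq> 1)"

definition S_sum :: "('a::{finite,field} \<Rightarrow> complex) \<Rightarrow> 'a set \<Rightarrow> 'a set \<Rightarrow> 'a set \<Rightarrow> complex" where
  "S_sum \<psi> A B C = (\<Sum>a\<in>A. \<Sum>b\<in>B. \<Sum>c\<in>C. \<psi> (a*b + a*c + b*c))"

definition add_energy :: "'a::{finite,field} set \<Rightarrow> nat" where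
  "add_energy U = card {(u1,u2,u3,u4). u1 \<in> U \<and> u2 \<in> U \<and> u3 \<in> U \<and> u4 \<in> U \<and> u1 + u2 = u3 + u4}"

end

theory Submission
  imports Defs "HOL-Analysis.Convex"
begin

text \<open>Since \<open>ab + ac + bc = a(b + c) + bc\<close>, the sum is \<open>\<Sum>a\<in>A. W a\<close> with
  \<open>W a = \<Sum>(b, c)\<in>B \<times> C. \<psi>(bc) \<psi>(a(b + c))\<close>. Cauchy-Schwarz in \<open>a\<close>, after extending the
  range of \<open>a\<close> from \<open>A\<close> to the whole field, reduces the claim to the mean value bound
  \<open>\<Sum>a. |W a|\<^sup>2 \<le> q E(B, C)\<close>, which is orthogonality of characters; here
  \<open>E(B, C) = #{b + c = b' + c'}\<close> is the mixed additive energy. Writing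
  \<open>E(B, C) = \<Sum>d. r\<^sub>B(d) r\<^sub>C(d)\<close> with \<open>r\<^sub>U(d) = #{u - u' = d}\<close>, Cauchy-Schwarz in \<open>d\<close>
  gives \<open>E(B, C)\<^sup>2 \<le> E(B) E(C)\<close>.\<close>

lemma additive_character_0:
  assumes "additive_character \<psi>"
  shows "\<psi> 0 = 1"
proof -
  have "\<psi> 0 = \<psi> 0 * \<psi> 0" "\<psi> 0 \<noteq> 0"
    using assms unfolding additive_character_def by (metis add_0, metis norm_zero zero_neq_one)
  then show ?thesis by simp
qed

lemma additive_character_diff:
  assumes "additive_character \<psi>"
  shows "\<psi> (x - y) = \<psi> x * cnj (\<psi> y)"
proof -
  have norm_1: "norm (\<psi> y) = 1" and hom: "\<psi> (x - y) * \<psi> y = \<psi> x"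
    using assms unfolding additive_character_def by (blast, metis diff_add_cancel)
  have "\<psi> y * cnj (\<psi> y) = 1"
    using norm_1 complex_norm_square[of "\<psi> y"] by simp
  then show ?thesis
    by (metis hom mult.assoc mult.commute mult.right_neutral)
qed

lemma sum_additive_character_mult:
  fixes \<psi> :: "'a::{finite,field} \<Rightarrow> complex"
  assumes "additive_character \<psi>" "nontrivial_character \<psi>"
  shows "(\<Sum>a\<in>UNIV. \<psi> (a * t)) = (if t = 0 then of_nat (card (UNIV :: 'a set)) else 0)"
proof (cases "t = 0")
  case True
  then show ?thesis by (simp add: additive_character_0[OF assms(1)])
next
  case False
  obtain u where u: "\<psi> u \<noteq> 1"
    using assms(2) unfolding nontrivial_character_def by blast
  have "(\<Sum>a\<in>UNIV. \<psi> (a * t)) = (\<Sum>a\<in>UNIV. \<psi> ((a + u / t) * t))"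
    by (rule sum.reindex_bij_witness[of _ "\<lambda>a. a + u / t" "\<lambda>a. a - u / t"]) auto
  also have "\<dots> = (\<Sum>a\<in>UNIV. \<psi> u * \<psi> (a * t))"
  proof (rule sum.cong)
    fix a
    have "(a + u / t) * t = u + a * t"
      using False by (simp add: field_simps)
    then show "\<psi> ((a + u / t) * t) = \<psi> u * \<psi> (a * t)"
      using assms(1) unfolding additive_character_def by simp
  qed simp
  also have "\<dots> = \<psi> u * (\<Sum>a\<in>UNIV. \<psi> (a * t))"
    by (simp add: sum_distrib_left)
  finally have "(1 - \<psi> u) * (\<Sum>a\<in>UNIV. \<psi> (a * t)) = 0"
    by (simp add: algebra_simps)
  with u False show ?thesis by simp
qed

lemma sum_norm_character_sum_squared_eq:
  fixes \<psi> :: "'a::{finite,field} \<Rightarrow> complex"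
    and w :: "'j \<Rightarrow> complex" and s :: "'j \<Rightarrow> 'a"
  assumes "additive_character \<psi>" "nontrivial_character \<psi>"
  shows "of_real (\<Sum>a\<in>UNIV. (norm (\<Sum>j\<in>J. w j * \<psi> (a * s j)))\<^sup>2) =
    of_nat (card (UNIV :: 'a set)) * (\<Sum>j\<in>J. \<Sum>j'\<in>J. of_bool (s j = s j') * (w j * cnj (w j')))"
proof -
  have "of_real (\<Sum>a\<in>UNIV. (norm (\<Sum>j\<in>J. w j * \<psi> (a * s j)))\<^sup>2) =
      (\<Sum>a\<in>UNIV. \<Sum>j\<in>J. \<Sum>j'\<in>J. w j * cnj (w j') * (\<psi> (a * s j) * cnj (\<psi> (a * s j'))))"
    unfolding of_real_sum complex_norm_square cnj_sum sum_product
    by (simp add: mult_ac)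
  also have "\<dots> = (\<Sum>j\<in>J. \<Sum>j'\<in>J. w j * cnj (w j') * (\<Sum>a\<in>UNIV. \<psi> (a * (s j - s j'))))"
    by (simp add: additive_character_diff[OF assms(1), symmetric] right_diff_distrib
        sum_distrib_left sum.swap[of _ UNIV])
  also have "\<dots> = of_nat (card (UNIV :: 'a set)) * (\<Sum>j\<in>J. \<Sum>j'\<in>J. of_bool (s j = s j') * (w j * cnj (w j')))"
    by (simp add: sum_additive_character_mult[OF assms] sum_distrib_left) (intro sum.cong refl; simp)
  finally show ?thesis .
qed

lemma sum_norm_character_sum_squared_le:
  fixes \<psi> :: "'a::{finite,field} \<Rightarrow> complex"
    and w :: "'j \<Rightarrow> complex" and s :: "'j \<Rightarrow> 'a"
  assumes "additive_character \<psi>" "nontrivial_character \<psi>"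
    and "\<And>j. j \<in> J \<Longrightarrow> norm (w j) \<le> 1"
  shows "(\<Sum>a\<in>UNIV. (norm (\<Sum>j\<in>J. w j * \<psi> (a * s j)))\<^sup>2) \<le>
    real (card (UNIV :: 'a set)) * (\<Sum>j\<in>J. \<Sum>j'\<in>J. of_bool (s j = s j'))"
proof -
  let ?L = "\<Sum>a\<in>UNIV. (norm (\<Sum>j\<in>J. w j * \<psi> (a * s j)))\<^sup>2"
  have "?L = norm (of_real ?L :: complex)"
    unfolding norm_of_real by (simp add: sum_nonneg)
  also have "\<dots> = real (card (UNIV :: 'a set)) *
      norm (\<Sum>j\<in>J. \<Sum>j'\<in>J. of_bool (s j = s j') * (w j * cnj (w j')))"
    by (simp only: sum_norm_character_sum_squared_eq[OF assms(1,2)] norm_mult norm_of_nat)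
  also have "\<dots> \<le> real (card (UNIV :: 'a set)) * (\<Sum>j\<in>J. \<Sum>j'\<in>J. of_bool (s j = s j'))"
    using assms(3) by (intro mult_left_mono sum_norm_le) (auto simp: norm_mult mult_le_one)
  finally show ?thesis .
qed

lemma norm_sum_le_sqrt_card_sum_squares:
  fixes f :: "'i \<Rightarrow> 'b::real_normed_vector"
  shows "norm (\<Sum>i\<in>I. f i) \<le> sqrt (real (card I) * (\<Sum>i\<in>I. (norm (f i))\<^sup>2))"
proof (rule real_le_rsqrt)
  have "(norm (\<Sum>i\<in>I. f i))\<^sup>2 \<le> (\<Sum>i\<in>I. norm (f i))\<^sup>2"
    by (intro power_mono norm_sum) simp
  also have "\<dots> \<le> (\<Sum>i\<in>I. (norm (f i))\<^sup>2) * real (card I)"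
    by (rule sum_squared_le_sum_of_squares)
  finally show "(norm (\<Sum>i\<in>I. f i))\<^sup>2 \<le> real (card I) * (\<Sum>i\<in>I. (norm (f i))\<^sup>2)"
    by (simp only: mult.commute)
qed

definition mixed_energy :: "'a::plus set \<Rightarrow> 'a set \<Rightarrow> real" where
  "mixed_energy B C = (\<Sum>(b, c)\<in>B \<times> C. \<Sum>(b', c')\<in>B \<times> C. of_bool (b + c = b' + c'))"

definition diff_count :: "'a::minus set \<Rightarrow> 'a \<Rightarrow> real" where
  "diff_count U d = (\<Sum>(u, u')\<in>U \<times> U. of_bool (u - u' = d))"

lemma add_energy_eq_mixed_energy: "real (add_energy U) = mixed_energy U U"
proof -
  let ?P = "\<lambda>((u1, u2), (u3, u4)). u1 + u2 = u3 + u4"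
  have quadruples: "{(u1, u2, u3, u4). u1 \<in> U \<and> u2 \<in> U \<and> u3 \<in> U \<and> u4 \<in> U \<and> u1 + u2 = u3 + u4} =
      (\<lambda>((u1, u2), (u3, u4)). (u1, u2, u3, u4)) ` ((U \<times> U) \<times> (U \<times> U) \<inter> Collect ?P)"
    by force
  have "add_energy U = card ((U \<times> U) \<times> (U \<times> U) \<inter> Collect ?P)"
    unfolding add_energy_def quadruples by (rule card_image) (auto simp: inj_on_def)
  also have "real \<dots> = (\<Sum>p\<in>(U \<times> U) \<times> (U \<times> U). of_bool (?P p))"
    by simp
  also have "\<dots> = mixed_energy U U"
    unfolding mixed_energy_def split_def sum.cartesian_product by (simp add: split_def)
  finally show ?thesis .
qed

lemma mixed_energy_eq_sum_diff_count:
  fixes B C :: "'a::{finite,ab_group_add} set"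
  shows "mixed_energy B C = (\<Sum>d\<in>UNIV. diff_count B d * diff_count C d)"
proof -
  have sum_cond: "b + c = b' + c' \<longleftrightarrow> b - b' = c' - c" for b b' c c' :: 'a
    by (auto simp: algebra_simps eq_diff_eq diff_eq_eq)
  have delta: "(\<Sum>d\<in>UNIV. of_bool (x = d) * of_bool (y = d)) = (of_bool (x = y) :: real)" for x y :: 'a
    by simp
  have "mixed_energy B C = (\<Sum>(b, b')\<in>B \<times> B. \<Sum>(c', c)\<in>C \<times> C. of_bool (b - b' = c' - c))"
    unfolding mixed_energy_def split_def sum.cartesian_product
    by (rule sum.reindex_bij_witness[of _ "\<lambda>((b, b'), (c', c)). ((b, c), (b', c'))"
          "\<lambda>((b, c), (b', c')). ((b, b'), (c', c))"]) (auto simp: split_def sum_cond[symmetric])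
  also have "\<dots> = (\<Sum>p\<in>B \<times> B. \<Sum>r\<in>C \<times> C. \<Sum>d\<in>UNIV.
      of_bool (fst p - snd p = d) * of_bool (fst r - snd r = d))"
    by (simp only: split_def delta)
  also have "\<dots> = (\<Sum>d\<in>UNIV. \<Sum>p\<in>B \<times> B. \<Sum>r\<in>C \<times> C.
      of_bool (fst p - snd p = d) * of_bool (fst r - snd r = d))"
    by (simp only: sum.swap[where B = UNIV])
  also have "\<dots> = (\<Sum>d\<in>UNIV. diff_count B d * diff_count C d)"
    unfolding diff_count_def split_def sum_product ..
  finally show ?thesis .
qed

lemma mixed_energy_le:
  fixes B C :: "'a::{finite,ab_group_add} set"
  shows "mixed_energy B C \<le> sqrt (mixed_energy B B * mixed_energy C C)"
proof (rule real_le_rsqrt)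
  show "(mixed_energy B C)\<^sup>2 \<le> mixed_energy B B * mixed_energy C C"
    unfolding mixed_energy_eq_sum_diff_count power2_eq_square[symmetric]
    by (rule Cauchy_Schwarz_ineq_sum)
qed

theorem lemma4p1:
  fixes \<psi> :: "'a::{finite,field} \<Rightarrow> complex"
    and A B C :: "'a set"
  assumes "additive_character \<psi>" and "nontrivial_character \<psi>"
  shows "norm (S_sum \<psi> A B C) \<le>
    sqrt (real (card A)) * real (add_energy B) powr (1/4) * real (add_energy C) powr (1/4)
      * sqrt (real (card (UNIV :: 'a set)))"
proof -
  let ?q = "real (card (UNIV :: 'a set))"
  define W where "W a = (\<Sum>j\<in>B \<times> C. \<psi> (fst j * snd j) * \<psi> (a * (fst j + snd j)))" for a
  have norm_1: "norm (\<psi> x) = 1" for x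
    using assms(1) unfolding additive_character_def by blast
  have "S_sum \<psi> A B C = (\<Sum>a\<in>A. W a)"
    using assms(1)
    by (simp add: S_sum_def W_def sum.cartesian_product split_def additive_character_def
        distrib_left add.commute)
  then have "norm (S_sum \<psi> A B C) \<le> sqrt (real (card A) * (\<Sum>a\<in>A. (norm (W a))\<^sup>2))"
    by (simp only: norm_sum_le_sqrt_card_sum_squares)
  also have "\<dots> \<le> sqrt (real (card A) * (\<Sum>a\<in>UNIV. (norm (W a))\<^sup>2))"
    by (intro real_sqrt_le_mono mult_left_mono sum_mono2) auto
  also have "\<dots> \<le> sqrt (real (card A) * (?q * mixed_energy B C))"
    using sum_norm_character_sum_squared_le[OF assms, of "B \<times> C" "\<lambda>j. \<psi> (fst j * snd j)"
        "\<lambda>j. fst j + snd j"]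
    by (intro real_sqrt_le_mono mult_left_mono) (simp_all add: W_def mixed_energy_def split_def norm_1)
  also have "\<dots> \<le> sqrt (real (card A) * (?q * sqrt (real (add_energy B) * real (add_energy C))))"
    using mixed_energy_le[of B C]
    by (intro real_sqrt_le_mono mult_left_mono) (simp_all add: add_energy_eq_mixed_energy)
  also have "\<dots> = sqrt (real (card A)) * real (add_energy B) powr (1/4) *
      real (add_energy C) powr (1/4) * sqrt ?q"
    by (simp add: real_sqrt_mult powr_half_sqrt[symmetric] powr_powr)
  finally show ?thesis .
qed

end
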